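(* Consider the $(1,\lambda)$-CSA-ES with $\lambda\ge1$, $0<c\le1$ and $d_\sigma>0$, applied to $f(x)=[x]_1$ on $\mathbb{R}^n$. Then for every $t$, $$\mathrm{Var}\Big(\ln\Big(\frac{\sigma_{t+1}}{\sigma_t}\Big)\Big)=\frac{c^2}{4d_\sigma^2n^2}\Big(\mathbb{E}([p_{t+1}]_1^4)-\mathbb{E}([p_{t+1}]_1^2)^2+2(n-1)\Big).$$ Furthermore, $\mathbb{E}([p_{t+1}]_1^2)\to\mathbb{E}(\mathcal{N}_{1:\lambda}^2)+\frac{2-2c}{c}\mathbb{E}(\mathcal{N}_{1:\lambda})^2$ as $t\to\infty$, and with $a=1-c$, $$\lim_{t\to\infty}\mathbb{E}([p_t]_1^4)=\frac{(1-a^2)^2}{1-a^4}\big(k_4+k_{31}+k_{22}+k_{211}+k_{1111}\big),$$ where $k_4=\mathbb{E}(\mathcal{N}_{1:\lambda}^4)$, $k_{31}=4\frac{a(1+a+2a^2)}{1-a^3}\mathbb{E}(\mathcal{N}_{1:\lambda}^3)\mathbb{E}(\mathcal{N}_{1:\lambda})$, $k_{22}=6\frac{a^2}{1-a^2}\mathbb{E}(\mathcal{N}_{1:\lambda}^2)^2$, $k_{211}=12\frac{a^3(1+2a+3a^2)}{(1-a^2)(1-a^3)}\mathbb{E}(\mathcal{N}_{1:\lambda}^2)\mathbb{E}(\mathcal{N}_{1:\lambda})^2$ and $k_{1111}=24\frac{a^6}{(1-a)(1-a^2)(1-a^3)}\mathbb{E}(\mathcal{N}_{1:\lambda})^4$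.
   Context: For $x\in\mathbb{R}^n$, $[x]_i$ denotes its $i$-th coordinate. The $(1,\lambda)$-CSA-ES with parameters $\lambda\ge1$, $0<c\le1$, $d_\sigma>0$, minimizing $f:\mathbb{R}^n\to\mathbb{R}$, is defined as follows. Start from $X_0\in\mathbb{R}^n$, $\sigma_0>0$, and $p_0\sim\mathcal{N}(0,I_n)$. At iteration $t$, draw $\xi_{t,1},\ldots,\xi_{t,\lambda}$ i.i.d. $\sim\mathcal{N}(0,I_n)$, independent of everything before; the children are $Y_{t,i}=X_t+\sigma_t\xi_{t,i}$. The next parent $X_{t+1}$ is the child with the smallest $f$-value, and $\xi^\star_t$ denotes the corresponding $\xi_{t,i}$, so that $X_{t+1}=X_t+\sigma_t\xi^\star_t$. The cumulative path is $p_{t+1}=(1-c)p_t+\sqrt{c(2-c)}\,\xi^\star_t$, and the step-size is updated as $\sigma_{t+1}=\sigma_t\exp\!\big(\tfrac{c}{2d_\sigma}(\|p_{t+1}\|^2/n-1)\big)$. For i.i.d. standard normal $\mathcal{N}_1,\ldots,\mathcal{N}_\lambda$, $\mathcal{N}_{1:\lambda}$ denotes their minimum; $\mathbb{E}(Y)^k$ denotes the $k$-th power of the expectation of $Y$. *)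

theory Defs
  imports "HOL-Probability.Probability"
begin

text \<open>Vectors of R^n are represented as functions nat => real; only coordinates
  0..n-1 are meaningful, coordinate 0 plays the role of [x]_1.\<close>

definition argmin_idx :: "nat \<Rightarrow> (nat \<Rightarrow> real) \<Rightarrow> nat" where
  "argmin_idx lam g = (LEAST i. i < lam \<and> (\<forall>j<lam. g i \<le> g j))"

text \<open>One sample path of the (1,lambda)-CSA-ES: state (X_t, sigma_t, p_t),
  driven by the samples xi t i (a vector) for iteration t and child i.\<close>
fun csa_state ::
  "((nat \<Rightarrow> real) \<Rightarrow> real) \<Rightarrow> nat \<Rightarrow> nat \<Rightarrow> real \<Rightarrow> real \<Rightarrow>
   (nat \<Rightarrow> real) \<Rightarrow> real \<Rightarrow> (nat \<Rightarrow> real) \<Rightarrow> (nat \<Rightarrow> nat \<Rightarrow> nat \<Rightarrow> real) \<Rightarrow> nat \<Rightarrow>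
   (nat \<Rightarrow> real) \<times> real \<times> (nat \<Rightarrow> real)" where
  "csa_state f n lam c d X0 s0 p0 xi 0 = (X0, s0, p0)"
| "csa_state f n lam c d X0 s0 p0 xi (Suc t) =
    (let (X, s, p) = csa_state f n lam c d X0 s0 p0 xi t;
         i = argmin_idx lam (\<lambda>i. f (\<lambda>k. X k + s * xi t i k));
         xs = xi t i;
         p' = (\<lambda>k. (1 - c) * p k + sqrt (c * (2 - c)) * xs k);
         s' = s * exp (c / (2 * d) * ((\<Sum>k<n. (p' k)\<^sup>2) / real n - 1));
         X' = (\<lambda>k. X k + s * xs k)
     in (X', s', p'))"

definition Emin :: "nat \<Rightarrow> nat \<Rightarrow> real" where
  "Emin lam k = integral\<^sup>L (PiM {..<lam} (\<lambda>_. density lborel std_normal_density))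
                   (\<lambda>x. (Min (x ` {..<lam})) ^ k)"

end

theory Submission
  imports Defs
begin

text \<open>On \<open>f(x) = [x]\<^sub>1\<close> the ranking of the children depends only on the first coordinates
  of the samples. So the selected sample \<open>\<xi>*\<^sub>t\<close> has first coordinate distributed as
  \<open>N\<^sub>1\<^sub>:\<^sub>\<lambda>\<close>, its other coordinates are fresh standard normals, and all of it is
  independent of the past. Since \<open>p\<^sub>t\<^sub>+\<^sub>1 = a p\<^sub>t + b \<xi>*\<^sub>t\<close> with \<open>a = 1 - c\<close> and
  \<open>a\<^sup>2 + b\<^sup>2 = 1\<close>, the coordinates \<open>[p\<^sub>t]\<^sub>k\<close>, \<open>k \<ge> 2\<close>, stay i.i.d. standard normal and
  independent of \<open>[p\<^sub>t]\<^sub>1\<close>, so the variance of \<open>ln (\<sigma>\<^sub>t\<^sub>+\<^sub>1 / \<sigma>\<^sub>t)\<close>, an affine function of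
  \<open>|p\<^sub>t\<^sub>+\<^sub>1|\<^sup>2\<close>, reduces to the second and fourth moments of \<open>[p\<^sub>t\<^sub>+\<^sub>1]\<^sub>1\<close>. By the
  binomial theorem these moments satisfy a triangular system of linear recurrences with
  contraction factors \<open>a\<^sup>\<alpha>\<close>; they converge to its fixed point.\<close>

section \<open>Linear recurrences and normal moments\<close>

lemma LIMSEQ_linear_recurrence_zero:
  fixes y h :: "nat \<Rightarrow> real"
  assumes r: "\<bar>r\<bar> < 1" and rec: "\<And>t. y (Suc t) = r * y t + h t" and h: "h \<longlonglongrightarrow> 0"
  shows "y \<longlonglongrightarrow> 0"
proof (rule LIMSEQ_I)
  fix e :: real assume e: "0 < e"
  define \<delta> where "\<delta> = e * (1 - \<bar>r\<bar>) / 2"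
  have \<delta>: "0 < \<delta>" "\<delta> / (1 - \<bar>r\<bar>) = e / 2"
    using e r by (auto simp: \<delta>_def field_simps)
  obtain N where N: "\<And>t. t \<ge> N \<Longrightarrow> \<bar>h t\<bar> < \<delta>"
    using LIMSEQ_D[OF h \<delta>(1)] by auto
  have bound: "\<bar>y (N + m)\<bar> \<le> \<bar>r\<bar> ^ m * \<bar>y N\<bar> + e / 2" for m
  proof (induction m)
    case 0
    then show ?case using e by simp
  next
    case (Suc m)
    have "\<bar>y (N + Suc m)\<bar> \<le> \<bar>r\<bar> * \<bar>y (N + m)\<bar> + \<delta>"
      using N[of "N + m"] abs_triangle_ineq[of "r * y (N + m)" "h (N + m)"]
      by (simp add: rec abs_mult)
    also have "\<dots> \<le> \<bar>r\<bar> * (\<bar>r\<bar> ^ m * \<bar>y N\<bar> + e / 2) + \<delta>"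
      using Suc.IH by (simp add: mult_left_mono)
    also have "\<dots> = \<bar>r\<bar> ^ Suc m * \<bar>y N\<bar> + e / 2"
      using r \<delta>(2) by (simp add: field_simps)
    finally show ?case .
  qed
  have "(\<lambda>m. \<bar>r\<bar> ^ m * \<bar>y N\<bar>) \<longlonglongrightarrow> 0"
    using r by (intro tendsto_mult_left_zero LIMSEQ_power_zero) auto
  then obtain M where M: "\<And>m. m \<ge> M \<Longrightarrow> \<bar>r\<bar> ^ m * \<bar>y N\<bar> < e / 2"
    using LIMSEQ_D[of _ 0 "e / 2"] e by fastforce
  have "\<bar>y t\<bar> < e" if "t \<ge> N + M" for t
  proof -
    have "\<bar>y t\<bar> \<le> \<bar>r\<bar> ^ (t - N) * \<bar>y N\<bar> + e / 2" and "\<bar>r\<bar> ^ (t - N) * \<bar>y N\<bar> < e / 2"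
      using bound[of "t - N"] M[of "t - N"] that by simp_all
    then show ?thesis by linarith
  qed
  then show "\<exists>T. \<forall>t\<ge>T. norm (y t - 0) < e" by auto
qed

lemma LIMSEQ_linear_recurrence:
  fixes x g :: "nat \<Rightarrow> real"
  assumes r: "\<bar>r\<bar> < 1" and rec: "\<And>t. x (Suc t) = r * x t + g t" and g: "g \<longlonglongrightarrow> G"
  shows "x \<longlonglongrightarrow> G / (1 - r)"
proof -
  have "(\<lambda>t. x t - G / (1 - r)) \<longlonglongrightarrow> 0"
  proof (rule LIMSEQ_linear_recurrence_zero[OF r])
    show "x (Suc t) - G / (1 - r) = r * (x t - G / (1 - r)) + (g t - G)" for t
      using r by (simp add: rec field_simps)
    show "(\<lambda>t. g t - G) \<longlonglongrightarrow> 0"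
      using g by (intro tendsto_eq_intros) auto
  qed
  then have "(\<lambda>t. x t - G / (1 - r) + G / (1 - r)) \<longlonglongrightarrow> 0 + G / (1 - r)"
    by (intro tendsto_intros)
  then show ?thesis by simp
qed

lemma atMost_one_nat: "{..1::nat} = {0, 1}"
  by auto

definition std_normal_moment :: "nat \<Rightarrow> real" where
  "std_normal_moment u = (\<integral>x. std_normal_density x * x ^ u \<partial>lborel)"

lemma std_normal_moment_values:
  "std_normal_moment 0 = 1" "std_normal_moment 1 = 0" "std_normal_moment 2 = 1"
  "std_normal_moment 3 = 0" "std_normal_moment 4 = 3"
  using integral_std_normal_moment_even[of 0] integral_std_normal_moment_odd[of 0]
    integral_std_normal_moment_even[of 1] integral_std_normal_moment_odd[of 1]
    integral_std_normal_moment_even[of 2]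
  by (simp_all add: std_normal_moment_def fact_numeral)

text \<open>The moments up to order four of \<open>a N + b N'\<close>, for independent standard normals \<open>N, N'\<close>
  and \<open>a\<^sup>2 + b\<^sup>2 = 1\<close>, are those of a standard normal.\<close>
lemma std_normal_moment_rotation:
  fixes a b :: real
  assumes ab: "a\<^sup>2 + b\<^sup>2 = 1" and "\<beta> \<le> 4"
  shows "(\<Sum>v\<le>\<beta>. of_nat (\<beta> choose v) * a ^ v * b ^ (\<beta> - v)
            * std_normal_moment v * std_normal_moment (\<beta> - v)) = std_normal_moment \<beta>"
proof -
  have "\<beta> \<in> {0, 1, 2, 3, 4}" using \<open>\<beta> \<le> 4\<close> by auto
  moreover have "3 * b ^ 4 + 6 * a\<^sup>2 * b\<^sup>2 + 3 * a ^ 4 = 3 * (a\<^sup>2 + b\<^sup>2)\<^sup>2"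
    by algebra
  ultimately show ?thesis
    using ab by (elim insertE emptyE)
      (simp_all add: atMost_nat_numeral atMost_one_nat binomial_fact fact_numeral
        std_normal_moment_values flip: One_nat_def)
qed

definition stationary_fourth_moment :: "real \<Rightarrow> (nat \<Rightarrow> real) \<Rightarrow> real" where
  "stationary_fourth_moment a m = (1 - a\<^sup>2)\<^sup>2 / (1 - a ^ 4) *
     (m 4
      + 4 * (a * (1 + a + 2 * a\<^sup>2) / (1 - a ^ 3)) * m 3 * m 1
      + 6 * (a\<^sup>2 / (1 - a\<^sup>2)) * (m 2)\<^sup>2
      + 12 * (a ^ 3 * (1 + 2 * a + 3 * a\<^sup>2) / ((1 - a\<^sup>2) * (1 - a ^ 3))) * m 2 * (m 1)\<^sup>2
      + 24 * (a ^ 6 / ((1 - a) * (1 - a\<^sup>2) * (1 - a ^ 3))) * (m 1) ^ 4)"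

lemma stationary_moments:
  fixes a b :: real and m :: "nat \<Rightarrow> real"
  assumes a: "0 \<le> a" "a < 1" and ab: "a\<^sup>2 + b\<^sup>2 = 1"
  defines "L1 \<equiv> b * m 1 / (1 - a)"
  defines "L2 \<equiv> (2 * a * b * L1 * m 1 + b\<^sup>2 * m 2) / (1 - a\<^sup>2)"
  defines "L3 \<equiv> (3 * a\<^sup>2 * b * L2 * m 1 + 3 * a * b\<^sup>2 * L1 * m 2 + b ^ 3 * m 3) / (1 - a ^ 3)"
  defines "L4 \<equiv> (4 * a ^ 3 * b * L3 * m 1 + 6 * a\<^sup>2 * b\<^sup>2 * L2 * m 2 + 4 * a * b ^ 3 * L1 * m 3
                  + b ^ 4 * m 4) / (1 - a ^ 4)"
  shows "L2 = m 2 + 2 * a / (1 - a) * (m 1)\<^sup>2" and "L4 = stationary_fourth_moment a m"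
proof -
  have b: "b\<^sup>2 = 1 - a\<^sup>2" using ab by simp
  have pow: "a ^ k \<noteq> 1" if "k > 0" for k :: nat
    using power_strict_mono[OF a(2) a(1) that] by simp
  text \<open>With the inverses of the \<open>1 - a\<^sup>k\<close> as atoms, both claims are ring identities
    modulo \<open>b\<^sup>2 = 1 - a\<^sup>2\<close>.\<close>
  have inv: "inverse (1 - a) * (1 - a) = 1" "inverse (1 - a\<^sup>2) * (1 - a\<^sup>2) = 1"
    "inverse (1 - a ^ 3) * (1 - a ^ 3) = 1" "inverse (1 - a ^ 4) * (1 - a ^ 4) = 1"
    using pow[of 2] pow[of 3] pow[of 4] a(2) by simp_all
  show "L2 = m 2 + 2 * a / (1 - a) * (m 1)\<^sup>2"
    unfolding L2_def L1_def divide_inverse inverse_mult_distrib using inv b by algebra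
  show "L4 = stationary_fourth_moment a m"
    unfolding stationary_fourth_moment_def L4_def L3_def L2_def L1_def divide_inverse
      inverse_mult_distrib
    using inv b by algebra
qed

text \<open>\<open>e \<alpha> t\<close> plays the role of \<open>E(x\<^sub>t\<^sup>\<alpha>)\<close> for \<open>x\<^sub>t\<^sub>+\<^sub>1 = a x\<^sub>t + b w\<^sub>t\<close> with \<open>w\<^sub>t\<close>
  independent of \<open>x\<^sub>t\<close> and \<open>E(w\<^sub>t\<^sup>k) = m k\<close>.\<close>
lemma moment_recurrence_limits:
  fixes e :: "nat \<Rightarrow> nat \<Rightarrow> real" and m :: "nat \<Rightarrow> real" and a b :: real
  assumes a: "0 \<le> a" "a < 1" and ab: "a\<^sup>2 + b\<^sup>2 = 1"
    and e0: "\<And>t. e 0 t = 1" and m0: "m 0 = 1"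
    and rec: "\<And>\<alpha> t. \<alpha> \<le> 4 \<Longrightarrow>
      e \<alpha> (Suc t) = (\<Sum>u\<le>\<alpha>. of_nat (\<alpha> choose u) * a ^ u * b ^ (\<alpha> - u) * e u t * m (\<alpha> - u))"
  shows "(\<lambda>t. e 2 t) \<longlonglongrightarrow> m 2 + 2 * a / (1 - a) * (m 1)\<^sup>2"
    and "(\<lambda>t. e 4 t) \<longlonglongrightarrow> stationary_fourth_moment a m"
proof -
  have rec_explicit:
    "e 1 (Suc t) = a * e 1 t + b * m 1"
    "e 2 (Suc t) = a\<^sup>2 * e 2 t + (2 * a * b * e 1 t * m 1 + b\<^sup>2 * m 2)"
    "e 3 (Suc t) = a ^ 3 * e 3 t + (3 * a\<^sup>2 * b * e 2 t * m 1 + 3 * a * b\<^sup>2 * e 1 t * m 2 + b ^ 3 * m 3)"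
    "e 4 (Suc t) = a ^ 4 * e 4 t + (4 * a ^ 3 * b * e 3 t * m 1 + 6 * a\<^sup>2 * b\<^sup>2 * e 2 t * m 2
                     + 4 * a * b ^ 3 * e 1 t * m 3 + b ^ 4 * m 4)" for t
    using rec[of 1 t] rec[of 2 t] rec[of 3 t] rec[of 4 t]
    by (simp_all add: atMost_nat_numeral atMost_one_nat binomial_fact fact_numeral e0 m0
        algebra_simps flip: One_nat_def)
  have a_pow: "\<bar>a ^ k\<bar> < 1" if "k > 0" for k :: nat
    using power_strict_mono[OF a(2) a(1) that] a by simp
  define L1 where "L1 = b * m 1 / (1 - a)"
  define L2 where "L2 = (2 * a * b * L1 * m 1 + b\<^sup>2 * m 2) / (1 - a\<^sup>2)"
  define L3 where "L3 = (3 * a\<^sup>2 * b * L2 * m 1 + 3 * a * b\<^sup>2 * L1 * m 2 + b ^ 3 * m 3) / (1 - a ^ 3)"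
  define L4 where "L4 = (4 * a ^ 3 * b * L3 * m 1 + 6 * a\<^sup>2 * b\<^sup>2 * L2 * m 2 + 4 * a * b ^ 3 * L1 * m 3
                        + b ^ 4 * m 4) / (1 - a ^ 4)"
  have lim1: "(\<lambda>t. e 1 t) \<longlonglongrightarrow> L1"
    unfolding L1_def using a_pow[of 1]
    by (intro LIMSEQ_linear_recurrence[where x="e 1", OF _ rec_explicit(1)]) auto
  have lim2: "(\<lambda>t. e 2 t) \<longlonglongrightarrow> L2"
    unfolding L2_def using a_pow[of 2] lim1
    by (intro LIMSEQ_linear_recurrence[where x="e 2", OF _ rec_explicit(2)] tendsto_intros) auto
  have lim3: "(\<lambda>t. e 3 t) \<longlonglongrightarrow> L3"
    unfolding L3_def using a_pow[of 3] lim1 lim2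
    by (intro LIMSEQ_linear_recurrence[where x="e 3", OF _ rec_explicit(3)] tendsto_intros) auto
  have lim4: "(\<lambda>t. e 4 t) \<longlonglongrightarrow> L4"
    unfolding L4_def using a_pow[of 4] lim1 lim2 lim3
    by (intro LIMSEQ_linear_recurrence[where x="e 4", OF _ rec_explicit(4)] tendsto_intros) auto
  have "L2 = m 2 + 2 * a / (1 - a) * (m 1)\<^sup>2"
    unfolding L2_def L1_def by (rule stationary_moments(1)[OF a ab])
  with lim2 show "(\<lambda>t. e 2 t) \<longlonglongrightarrow> m 2 + 2 * a / (1 - a) * (m 1)\<^sup>2"
    by simp
  have "L4 = stationary_fourth_moment a m"
    unfolding L4_def L3_def L2_def L1_def by (rule stationary_moments(2)[OF a ab])
  with lim4 show "(\<lambda>t. e 4 t) \<longlonglongrightarrow> stationary_fourth_moment a m"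
    by simp
qed

lemma abs_power_prod_le:
  fixes x y z w :: real
  assumes "e1 + e2 + e3 + e4 \<le> 4"
  shows "\<bar>x ^ e1 * y ^ e2 * z ^ e3 * w ^ e4\<bar> \<le> 1 + x ^ 4 + y ^ 4 + z ^ 4 + w ^ 4"
proof -
  define m where "m = max (max \<bar>x\<bar> \<bar>y\<bar>) (max \<bar>z\<bar> \<bar>w\<bar>)"
  have m: "0 \<le> m" by (simp add: m_def)
  have "\<bar>x ^ e1 * y ^ e2 * z ^ e3 * w ^ e4\<bar> = \<bar>x\<bar> ^ e1 * \<bar>y\<bar> ^ e2 * \<bar>z\<bar> ^ e3 * \<bar>w\<bar> ^ e4"
    by (simp add: abs_mult power_abs)
  also have "\<dots> \<le> m ^ e1 * m ^ e2 * m ^ e3 * m ^ e4"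
    by (intro mult_mono power_mono) (auto simp: m_def le_max_iff_disj)
  also have "\<dots> = m ^ (e1 + e2 + e3 + e4)"
    by (simp add: power_add)
  also have "\<dots> \<le> 1 + m ^ 4"
  proof (cases "m \<le> 1")
    case True
    then show ?thesis using power_le_one[OF m True, where n="e1 + e2 + e3 + e4"] zero_le_power[OF m, of 4] by linarith
  next
    case False
    then have "m ^ (e1 + e2 + e3 + e4) \<le> m ^ 4" using power_increasing[OF assms, of m] by simp
    then show ?thesis by simp
  qed
  also have "m ^ 4 \<in> {x ^ 4, y ^ 4, z ^ 4, w ^ 4}"
    by (auto simp: m_def max_def power_even_abs_numeral)
  then have "m ^ 4 \<le> x ^ 4 + y ^ 4 + z ^ 4 + w ^ 4"
    by (auto simp: zero_le_even_power)
  finally show ?thesis by simp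
qed

lemma power4_add_le:
  fixes x y :: real
  shows "(x + y) ^ 4 \<le> 8 * x ^ 4 + 8 * y ^ 4"
proof -
  have "(x + y)\<^sup>2 \<le> 2 * (x\<^sup>2 + y\<^sup>2)" and sq: "(x\<^sup>2 + y\<^sup>2)\<^sup>2 \<le> 2 * (x ^ 4 + y ^ 4)"
    using sum_squares_ge_zero[of "x - y" 0] sum_squares_ge_zero[of "x\<^sup>2 - y\<^sup>2" 0]
    by (simp_all add: power2_eq_square power4_eq_xxxx algebra_simps)
  then have "((x + y)\<^sup>2)\<^sup>2 \<le> (2 * (x\<^sup>2 + y\<^sup>2))\<^sup>2"
    by (intro power_mono) auto
  with sq show ?thesis
    by (simp add: power2_eq_square power4_eq_xxxx algebra_simps)
qed

context prob_space
begin

lemma integrable_power_prod: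
  fixes f1 f2 f3 f4 :: "'a \<Rightarrow> real"
  assumes "f1 \<in> borel_measurable M" "f2 \<in> borel_measurable M"
    "f3 \<in> borel_measurable M" "f4 \<in> borel_measurable M"
    and "integrable M (\<lambda>\<omega>. f1 \<omega> ^ 4)" "integrable M (\<lambda>\<omega>. f2 \<omega> ^ 4)"
    "integrable M (\<lambda>\<omega>. f3 \<omega> ^ 4)" "integrable M (\<lambda>\<omega>. f4 \<omega> ^ 4)"
    and "e1 + e2 + e3 + e4 \<le> 4"
  shows "integrable M (\<lambda>\<omega>. f1 \<omega> ^ e1 * f2 \<omega> ^ e2 * f3 \<omega> ^ e3 * f4 \<omega> ^ e4)"
proof (rule Bochner_Integration.integrable_bound)
  show "integrable M (\<lambda>\<omega>. 1 + f1 \<omega> ^ 4 + f2 \<omega> ^ 4 + f3 \<omega> ^ 4 + f4 \<omega> ^ 4)"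
    using assms(5-8) by simp
  show "(\<lambda>\<omega>. f1 \<omega> ^ e1 * f2 \<omega> ^ e2 * f3 \<omega> ^ e3 * f4 \<omega> ^ e4) \<in> borel_measurable M"
    using assms(1-4) by simp
  have "0 \<le> 1 + x ^ 4 + y ^ 4 + z ^ 4 + w ^ 4" for x y z w :: real
    by (simp add: add_nonneg_nonneg zero_le_even_power)
  then show "AE \<omega> in M. norm (f1 \<omega> ^ e1 * f2 \<omega> ^ e2 * f3 \<omega> ^ e3 * f4 \<omega> ^ e4)
      \<le> norm (1 + f1 \<omega> ^ 4 + f2 \<omega> ^ 4 + f3 \<omega> ^ 4 + f4 \<omega> ^ 4)"
    using abs_power_prod_le[OF assms(9)] by (intro AE_I2) simp
qed

lemma integrable_power_mult:
  fixes f g :: "'a \<Rightarrow> real"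
  assumes "f \<in> borel_measurable M" "g \<in> borel_measurable M"
    "integrable M (\<lambda>\<omega>. f \<omega> ^ 4)" "integrable M (\<lambda>\<omega>. g \<omega> ^ 4)" "e1 + e2 \<le> 4"
  shows "integrable M (\<lambda>\<omega>. f \<omega> ^ e1 * g \<omega> ^ e2)"
  using integrable_power_prod[OF assms(1,2,1,1,3,4,3,3), of e1 e2 0 0] assms(5) by simp

lemma variance_affine:
  fixes S :: "'a \<Rightarrow> real"
  assumes "integrable M S" "integrable M (\<lambda>\<omega>. (S \<omega>)\<^sup>2)"
  shows "(\<integral>\<omega>. (A * S \<omega> + B - (\<integral>\<omega>'. A * S \<omega>' + B \<partial>M))\<^sup>2 \<partial>M) =
         A\<^sup>2 * ((\<integral>\<omega>. (S \<omega>)\<^sup>2 \<partial>M) - (\<integral>\<omega>. S \<omega> \<partial>M)\<^sup>2)"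
proof -
  define m where "m = (\<integral>\<omega>. S \<omega> \<partial>M)"
  have "(\<integral>\<omega>'. A * S \<omega>' + B \<partial>M) = A * m + B"
    using assms by (simp add: m_def prob_space)
  then have "(\<integral>\<omega>. (A * S \<omega> + B - (\<integral>\<omega>'. A * S \<omega>' + B \<partial>M))\<^sup>2 \<partial>M) =
      (\<integral>\<omega>. A\<^sup>2 * (S \<omega>)\<^sup>2 + (- 2 * A\<^sup>2 * m) * S \<omega> + A\<^sup>2 * m\<^sup>2 \<partial>M)"
    by (intro Bochner_Integration.integral_cong) (simp_all add: power2_eq_square algebra_simps)
  also have "\<dots> = A\<^sup>2 * (\<integral>\<omega>. (S \<omega>)\<^sup>2 \<partial>M) + (- 2 * A\<^sup>2 * m) * m + A\<^sup>2 * m\<^sup>2"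
    using assms by (simp add: m_def prob_space)
  finally show ?thesis by (simp add: m_def power2_eq_square algebra_simps)
qed

lemma integral_binomial_expansion:
  fixes P Q X Y :: "'a \<Rightarrow> real" and A B :: real
  assumes meas: "P \<in> borel_measurable M" "Q \<in> borel_measurable M"
      "X \<in> borel_measurable M" "Y \<in> borel_measurable M"
    and int: "integrable M (\<lambda>\<omega>. P \<omega> ^ 4)" "integrable M (\<lambda>\<omega>. Q \<omega> ^ 4)"
      "integrable M (\<lambda>\<omega>. X \<omega> ^ 4)" "integrable M (\<lambda>\<omega>. Y \<omega> ^ 4)"
    and deg: "\<alpha> + \<beta> \<le> 4"
    and factor: "\<And>u v. u \<le> \<alpha> \<Longrightarrow> v \<le> \<beta> \<Longrightarrow>
       (\<integral>\<omega>. (P \<omega> ^ u * Q \<omega> ^ v) * (X \<omega> ^ (\<alpha> - u) * Y \<omega> ^ (\<beta> - v)) \<partial>M) =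
       (\<integral>\<omega>. P \<omega> ^ u * Q \<omega> ^ v \<partial>M) * (\<integral>\<omega>. X \<omega> ^ (\<alpha> - u) * Y \<omega> ^ (\<beta> - v) \<partial>M)"
  shows "(\<integral>\<omega>. (A * P \<omega> + B * X \<omega>) ^ \<alpha> * (A * Q \<omega> + B * Y \<omega>) ^ \<beta> \<partial>M) =
    (\<Sum>u\<le>\<alpha>. \<Sum>v\<le>\<beta>. of_nat (\<alpha> choose u) * of_nat (\<beta> choose v) * A ^ (u + v) * B ^ (\<alpha> + \<beta> - u - v)
        * (\<integral>\<omega>. P \<omega> ^ u * Q \<omega> ^ v \<partial>M) * (\<integral>\<omega>. X \<omega> ^ (\<alpha> - u) * Y \<omega> ^ (\<beta> - v) \<partial>M))"
proof -
  define coeff where "coeff u v =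
    of_nat (\<alpha> choose u) * of_nat (\<beta> choose v) * A ^ (u + v) * B ^ (\<alpha> + \<beta> - u - v)" for u v
  define T where "T u v \<omega> = (P \<omega> ^ u * Q \<omega> ^ v) * (X \<omega> ^ (\<alpha> - u) * Y \<omega> ^ (\<beta> - v))" for u v \<omega>
  have expand: "(A * P \<omega> + B * X \<omega>) ^ \<alpha> * (A * Q \<omega> + B * Y \<omega>) ^ \<beta> =
      (\<Sum>u\<le>\<alpha>. \<Sum>v\<le>\<beta>. coeff u v * T u v \<omega>)" for \<omega>
  proof -
    have "B ^ (\<alpha> - u) * B ^ (\<beta> - v) = B ^ (\<alpha> + \<beta> - u - v)" if "u \<le> \<alpha>" "v \<le> \<beta>" for u v
      using that by (simp flip: power_add)
    then show ?thesis
      unfolding binomial_ring sum_product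
      by (intro sum.cong refl)
        (auto simp: coeff_def T_def power_mult_distrib power_add mult_ac)
  qed
  have int_T: "integrable M (T u v)" if "u \<le> \<alpha>" "v \<le> \<beta>" for u v
    using integrable_power_prod[OF meas int, of u v "\<alpha> - u" "\<beta> - v"] that deg
    unfolding T_def by (simp add: mult.assoc)
  have "(\<integral>\<omega>. (A * P \<omega> + B * X \<omega>) ^ \<alpha> * (A * Q \<omega> + B * Y \<omega>) ^ \<beta> \<partial>M) =
      (\<Sum>u\<le>\<alpha>. \<Sum>v\<le>\<beta>. coeff u v * (\<integral>\<omega>. T u v \<omega> \<partial>M))"
    unfolding expand using int_T
    by (subst Bochner_Integration.integral_sum, fastforce intro: Bochner_Integration.integrable_sum)
      (simp add: Bochner_Integration.integral_sum)
  also have "\<dots> = (\<Sum>u\<le>\<alpha>. \<Sum>v\<le>\<beta>. coeff u v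
      * (\<integral>\<omega>. P \<omega> ^ u * Q \<omega> ^ v \<partial>M) * (\<integral>\<omega>. X \<omega> ^ (\<alpha> - u) * Y \<omega> ^ (\<beta> - v) \<partial>M))"
    by (intro sum.cong refl) (simp add: T_def factor)
  finally show ?thesis
    unfolding coeff_def .
qed

section \<open>Independent families of random variables\<close>

definition vars_sigma :: "('i \<Rightarrow> 'a \<Rightarrow> real) \<Rightarrow> 'i set \<Rightarrow> 'a measure" where
  "vars_sigma X A = sigma (space M) (\<Union>j\<in>A. {X j -` S \<inter> space M | S. S \<in> sets borel})"

lemma space_vars_sigma [simp]: "space (vars_sigma X A) = space M"
  by (auto simp: vars_sigma_def space_measure_of_conv)

lemma sets_vars_sigma:
  "sets (vars_sigma X A) = sigma_sets (space M) (\<Union>j\<in>A. {X j -` S \<inter> space M | S. S \<in> sets borel})"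
  unfolding vars_sigma_def by (rule sets_measure_of) auto

lemma measurable_vars_sigma: "j \<in> A \<Longrightarrow> X j \<in> borel_measurable (vars_sigma X A)"
  by (rule measurableI) (auto simp: sets_vars_sigma)

lemma vars_sigma_mono:
  assumes "A \<subseteq> B" "f \<in> measurable (vars_sigma X A) N"
  shows "f \<in> measurable (vars_sigma X B) N"
proof -
  have "sets (vars_sigma X A) \<subseteq> sets (vars_sigma X B)"
    unfolding sets_vars_sigma by (rule sigma_sets_subseteq) (use assms(1) in auto)
  with assms(2) show ?thesis
    unfolding measurable_def by auto
qed

lemma measurable_vars_sigma_subalgebra:
  assumes "\<And>j. j \<in> A \<Longrightarrow> X j \<in> borel_measurable M" "f \<in> borel_measurable (vars_sigma X A)"
  shows "f \<in> borel_measurable M"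
proof (rule borel_measurable_subalgebra[OF _ _ assms(2)])
  show "sets (vars_sigma X A) \<subseteq> sets M"
    unfolding sets_vars_sigma using assms(1)
    by (intro sets.sigma_sets_subset) (auto intro: measurable_sets)
qed simp

lemma indep_set_vars_sigma:
  assumes ind: "indep_vars (\<lambda>_. borel) X J" and AB: "A \<subseteq> J" "B \<subseteq> J" "A \<inter> B = {}"
  shows "indep_set (sets (vars_sigma X A)) (sets (vars_sigma X B))"
proof -
  let ?E = "\<lambda>j. {X j -` S \<inter> space M | S. S \<in> sets (borel :: real measure)}"
  let ?I = "\<lambda>b::bool. if b then A else B"
  have "indep_sets ?E (\<Union>b. ?I b)"
    using ind AB unfolding indep_vars_def2 by (auto intro: indep_sets_mono_index)
  then have "indep_sets (\<lambda>b. sigma_sets (space M) (\<Union>j\<in>?I b. ?E j)) UNIV"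
  proof (rule indep_sets_collect_sigma)
    show "Int_stable (?E j)" for j
      unfolding Int_stable_def
    proof clarify
      fix S T :: "real set" assume "S \<in> sets borel" "T \<in> sets borel"
      then show "\<exists>U. X j -` S \<inter> space M \<inter> (X j -` T \<inter> space M) = X j -` U \<inter> space M
          \<and> U \<in> sets borel"
        by (intro exI[of _ "S \<inter> T"]) auto
    qed
    show "disjoint_family_on ?I UNIV"
      using AB(3) by (auto simp: disjoint_family_on_def)
  qed
  moreover have "(\<lambda>b. sigma_sets (space M) (\<Union>j\<in>?I b. ?E j)) =
      case_bool (sets (vars_sigma X A)) (sets (vars_sigma X B))"
    by (rule ext) (simp add: sets_vars_sigma split: bool.split)
  ultimately show ?thesis
    unfolding indep_set_def by simp
qed

lemma indep_vars_sigma_integral_mult: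
  fixes Y Z :: "'a \<Rightarrow> real"
  assumes ind: "indep_vars (\<lambda>_. borel) X J" and AB: "A \<subseteq> J" "B \<subseteq> J" "A \<inter> B = {}"
    and Y: "Y \<in> borel_measurable (vars_sigma X A)" and Z: "Z \<in> borel_measurable (vars_sigma X B)"
    and int: "integrable M Y" "integrable M Z"
  shows "(\<integral>\<omega>. Y \<omega> * Z \<omega> \<partial>M) = (\<integral>\<omega>. Y \<omega> \<partial>M) * (\<integral>\<omega>. Z \<omega> \<partial>M)"
    and "integrable M (\<lambda>\<omega>. Y \<omega> * Z \<omega>)"
proof -
  have X: "X j \<in> borel_measurable M" if "j \<in> J" for j
    using ind that unfolding indep_vars_def by blast
  have YM: "Y \<in> borel_measurable M"
    using AB(1) X by (intro measurable_vars_sigma_subalgebra[OF _ Y]) auto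
  have ZM: "Z \<in> borel_measurable M"
    using AB(2) X by (intro measurable_vars_sigma_subalgebra[OF _ Z]) auto
  have "indep_var borel Y borel Z"
    unfolding indep_var_eq
  proof (intro conjI YM ZM)
    have sub_A: "sigma_sets (space M) {Y -` S \<inter> space M | S. S \<in> sets borel} \<subseteq> sets (vars_sigma X A)"
      unfolding sets_vars_sigma
      by (rule sigma_sets_mono) (use measurable_sets[OF Y] in \<open>auto simp: sets_vars_sigma[symmetric]\<close>)
    have sub_B: "sigma_sets (space M) {Z -` S \<inter> space M | S. S \<in> sets borel} \<subseteq> sets (vars_sigma X B)"
      unfolding sets_vars_sigma
      by (rule sigma_sets_mono) (use measurable_sets[OF Z] in \<open>auto simp: sets_vars_sigma[symmetric]\<close>)
    show "indep_set (sigma_sets (space M) {Y -` S \<inter> space M | S. S \<in> sets borel})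
        (sigma_sets (space M) {Z -` S \<inter> space M | S. S \<in> sets borel})"
      using indep_set_vars_sigma[OF ind AB] unfolding indep_set_def
      by (rule indep_sets_mono_sets) (use sub_A sub_B in \<open>auto split: bool.split\<close>)
  qed
  then show "(\<integral>\<omega>. Y \<omega> * Z \<omega> \<partial>M) = (\<integral>\<omega>. Y \<omega> \<partial>M) * (\<integral>\<omega>. Z \<omega> \<partial>M)"
    and "integrable M (\<lambda>\<omega>. Y \<omega> * Z \<omega>)"
    using indep_var_lebesgue_integral indep_var_integrable int by blast+
qed

lemma indep_sets_reindex:
  assumes f: "inj_on f I" and ind: "indep_sets F (f ` I)"
  shows "indep_sets (\<lambda>i. F (f i)) I"
proof (rule indep_setsI)
  show "F (f i) \<subseteq> events" if "i \<in> I" for i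
    using ind that unfolding indep_sets_def by auto
  fix A J assume J: "J \<noteq> {}" "J \<subseteq> I" "finite J" and A: "\<forall>j\<in>J. A j \<in> F (f j)"
  have inj: "inj_on f J" using inj_on_subset[OF f J(2)] .
  define B where "B k = A (the_inv_into J f k)" for k
  have "prob (\<Inter>k\<in>f ` J. B k) = (\<Prod>k\<in>f ` J. prob (B k))"
    using J A inj by (intro indep_setsD[OF ind]) (auto simp: B_def the_inv_into_f_f)
  then show "prob (\<Inter>j\<in>J. A j) = (\<Prod>j\<in>J. prob (A j))"
    using inj by (simp add: B_def the_inv_into_f_f prod.reindex)
qed

lemma indep_vars_reindex:
  assumes f: "inj_on f I" and ind: "indep_vars M' X (f ` I)"
  shows "indep_vars (\<lambda>i. M' (f i)) (\<lambda>i. X (f i)) I"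
  unfolding indep_vars_def2
proof
  show "\<forall>i\<in>I. random_variable (M' (f i)) (X (f i))"
    using ind unfolding indep_vars_def2 by blast
  have "indep_sets (\<lambda>j. {X j -` A \<inter> space M | A. A \<in> sets (M' j)}) (f ` I)"
    using ind unfolding indep_vars_def2 by blast
  then show "indep_sets (\<lambda>i. {X (f i) -` A \<inter> space M | A. A \<in> sets (M' (f i))}) I"
    by (rule indep_sets_reindex[OF f])
qed


lemma std_normal_power:
  assumes "distributed M lborel X std_normal_density"
  shows "integrable M (\<lambda>\<omega>. X \<omega> ^ u)" and "(\<integral>\<omega>. X \<omega> ^ u \<partial>M) = std_normal_moment u"
  using distributed_integrable[OF assms, of "\<lambda>x. x ^ u"] integrable_std_normal_moment[of u]
    distributed_integral[OF assms, of "\<lambda>x. x ^ u"]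
  by (simp_all add: std_normal_moment_def)

lemma distr_indep_std_normal:
  assumes I: "I \<noteq> {}" and ind: "indep_vars (\<lambda>_. borel) Y I"
    and normal: "\<And>i. i \<in> I \<Longrightarrow> distributed M lborel (Y i) std_normal_density"
  shows "distr M (PiM I (\<lambda>_. std_normal_distribution)) (\<lambda>\<omega>. \<lambda>i\<in>I. Y i \<omega>) =
    PiM I (\<lambda>_. std_normal_distribution)"
proof -
  have sets: "sets std_normal_distribution = sets borel" by simp
  have rv: "random_variable std_normal_distribution (Y i)" if "i \<in> I" for i
    using ind that unfolding indep_vars_def by (simp add: measurable_cong_sets[OF refl sets])
  have "indep_vars (\<lambda>_. std_normal_distribution) Y I"
    using ind unfolding indep_vars_def2 by (simp add: measurable_cong_sets[OF refl sets])
  then have "distr M (PiM I (\<lambda>_. std_normal_distribution)) (\<lambda>\<omega>. \<lambda>i\<in>I. Y i \<omega>) =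
      PiM I (\<lambda>i. distr M std_normal_distribution (Y i))"
    using indep_vars_iff_distr_eq_PiM'[where M'="\<lambda>_. std_normal_distribution", OF I rv] by simp
  also have "\<dots> = PiM I (\<lambda>_. std_normal_distribution)"
  proof (intro PiM_cong refl)
    fix i assume i: "i \<in> I"
    then have "distr M std_normal_distribution (Y i) = distr M lborel (Y i)"
      by (intro distr_cong) auto
    also have "\<dots> = std_normal_distribution"
      using normal[OF i] by (simp add: distributed_distr_eq_density)
    finally show "distr M std_normal_distribution (Y i) = std_normal_distribution" .
  qed
  finally show ?thesis .
qed

lemma integral_Min_std_normal:
  fixes Y :: "nat \<Rightarrow> 'a \<Rightarrow> real"
  assumes lam: "lam \<ge> 1" and ind: "indep_vars (\<lambda>_. borel) Y {..<lam}"
    and normal: "\<And>i. i < lam \<Longrightarrow> distributed M lborel (Y i) std_normal_density"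
  shows "(\<integral>\<omega>. Min ((\<lambda>i. Y i \<omega>) ` {..<lam}) ^ u \<partial>M) = Emin lam u"
proof -
  let ?N = "PiM {..<lam} (\<lambda>_. std_normal_distribution)"
  have sets: "sets std_normal_distribution = sets borel" by simp
  define G where "G z = Min (z ` {..<lam}) ^ u" for z :: "nat \<Rightarrow> real"
  have [measurable]: "(\<lambda>z. z i) \<in> borel_measurable ?N" if "i \<in> {..<lam}" for i
    using measurable_component_singleton[OF that, of "\<lambda>_. std_normal_distribution"]
    by (simp add: measurable_cong_sets[OF refl sets])
  have "(\<lambda>z. Min ((\<lambda>i. z i) ` {..<lam})) \<in> borel_measurable ?N"
    by (rule borel_measurable_Min) auto
  then have G: "G \<in> borel_measurable ?N"
    unfolding G_def by measurable
  have "random_variable std_normal_distribution (Y i)" if "i < lam" for i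
    using ind that unfolding indep_vars_def by (simp add: measurable_cong_sets[OF refl sets])
  then have vec: "(\<lambda>\<omega>. \<lambda>i\<in>{..<lam}. Y i \<omega>) \<in> measurable M ?N"
    by (intro measurable_restrict) auto
  have distr: "distr M ?N (\<lambda>\<omega>. \<lambda>i\<in>{..<lam}. Y i \<omega>) = ?N"
    using lam normal by (intro distr_indep_std_normal ind) (auto simp: lessThan_empty_iff)
  have "Emin lam u = integral\<^sup>L ?N G"
    unfolding Emin_def by (rule Bochner_Integration.integral_cong) (simp_all add: G_def)
  also have "\<dots> = (\<integral>\<omega>. G (\<lambda>i\<in>{..<lam}. Y i \<omega>) \<partial>M)"
    by (subst distr[symmetric]) (rule integral_distr[OF vec G])
  also have "\<dots> = (\<integral>\<omega>. Min ((\<lambda>i. Y i \<omega>) ` {..<lam}) ^ u \<partial>M)"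
    by (rule Bochner_Integration.integral_cong) (simp_all add: G_def)
  finally show ?thesis ..
qed

end

section \<open>The (1,\<open>\<lambda>\<close>)-CSA-ES on a linear function\<close>

lemma argmin_idx_affine:
  fixes s :: real
  assumes "s > 0"
  shows "argmin_idx lam (\<lambda>i. x + s * g i) = argmin_idx lam g"
  unfolding argmin_idx_def using assms by simp

lemma argmin_idx_is_min:
  assumes "lam \<ge> 1"
  shows "argmin_idx lam g < lam \<and> g (argmin_idx lam g) = Min (g ` {..<lam})"
proof -
  have fin: "finite (g ` {..<lam})" "g ` {..<lam} \<noteq> {}"
    using assms by (auto simp: lessThan_empty_iff)
  obtain i where "i < lam" "g i = Min (g ` {..<lam})"
    using Min_in[OF fin] by auto
  then have "i < lam \<and> (\<forall>j<lam. g i \<le> g j)" using fin by auto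
  then have "argmin_idx lam g < lam \<and> (\<forall>j<lam. g (argmin_idx lam g) \<le> g j)"
    unfolding argmin_idx_def by (rule LeastI)
  with fin show ?thesis
    by (auto intro!: Min_eqI[symmetric])
qed

text \<open>No sign condition on \<open>d\<close> is needed: it only enters through the factor \<open>c / (2 d)\<close>.\<close>
locale csa_first_coordinate = prob_space M for M :: "'a measure" +
  fixes n lam :: nat and c d s0 :: real
    and X0 :: "nat \<Rightarrow> real" and p0 :: "'a \<Rightarrow> nat \<Rightarrow> real"
    and xi :: "'a \<Rightarrow> nat \<Rightarrow> nat \<Rightarrow> nat \<Rightarrow> real"
  assumes n: "n \<ge> 1" and lam: "lam \<ge> 1" and c: "0 < c" "c \<le> 1" and s0: "s0 > 0"
    and indep: "indep_vars (\<lambda>_. borel)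
        (\<lambda>j \<omega>. case j of Inl k \<Rightarrow> p0 \<omega> k | Inr (t, i, k) \<Rightarrow> xi \<omega> t i k)
        ({Inl k | k. k < n} \<union> {Inr (t, i, k) | t i k. i < lam \<and> k < n})"
    and p0_normal: "\<And>k. k < n \<Longrightarrow> distributed M lborel (\<lambda>\<omega>. p0 \<omega> k) std_normal_density"
    and xi_normal: "\<And>t i k. i < lam \<Longrightarrow> k < n \<Longrightarrow>
                      distributed M lborel (\<lambda>\<omega>. xi \<omega> t i k) std_normal_density"
begin

definition noise :: "nat + nat \<times> nat \<times> nat \<Rightarrow> 'a \<Rightarrow> real" where
  "noise j \<omega> = (case j of Inl k \<Rightarrow> p0 \<omega> k | Inr (t, i, k) \<Rightarrow> xi \<omega> t i k)"

definition noise_index :: "(nat + nat \<times> nat \<times> nat) set" where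
  "noise_index = {Inl k | k. k < n} \<union> {Inr (t, i, k) | t i k. i < lam \<and> k < n}"

definition past :: "nat \<Rightarrow> (nat + nat \<times> nat \<times> nat) set" where
  "past t = {Inl k | k. k < n} \<union> {Inr (s, i, k) | s i k. s < t \<and> i < lam \<and> k < n}"

definition block :: "nat \<Rightarrow> (nat + nat \<times> nat \<times> nat) set" where
  "block t = {Inr (t, i, k) | i k. i < lam \<and> k < n}"

definition step_size :: "nat \<Rightarrow> 'a \<Rightarrow> real" where
  "step_size t \<omega> = fst (snd (csa_state (\<lambda>x. x 0) n lam c d X0 s0 (p0 \<omega>) (xi \<omega>) t))"

definition path :: "nat \<Rightarrow> 'a \<Rightarrow> nat \<Rightarrow> real" where
  "path t \<omega> = snd (snd (csa_state (\<lambda>x. x 0) n lam c d X0 s0 (p0 \<omega>) (xi \<omega>) t))"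

definition selected :: "nat \<Rightarrow> 'a \<Rightarrow> nat" where
  "selected t \<omega> = argmin_idx lam (\<lambda>i. xi \<omega> t i 0)"

definition selected_step :: "nat \<Rightarrow> nat \<Rightarrow> 'a \<Rightarrow> real" where
  "selected_step t k \<omega> = xi \<omega> t (selected t \<omega>) k"

definition decay :: real where "decay = 1 - c"

definition gain :: real where "gain = sqrt (c * (2 - c))"

lemma decay_gain: "0 \<le> decay" "decay < 1" "decay\<^sup>2 + gain\<^sup>2 = 1"
  using c by (auto simp: decay_def gain_def power2_eq_square algebra_simps)

text \<open>While \<open>\<sigma>\<^sub>t > 0\<close>, the ranking of the children by \<open>[x]\<^sub>1\<close> is the ranking of the first
  coordinates of the samples, so the selection ignores \<open>X\<^sub>t\<close> and \<open>\<sigma>\<^sub>t\<close>.\<close>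
lemma csa_state_Suc:
  assumes "step_size t \<omega> > 0"
  shows "path (Suc t) \<omega> = (\<lambda>k. decay * path t \<omega> k + gain * selected_step t k \<omega>)"
    and "step_size (Suc t) \<omega> =
      step_size t \<omega> * exp (c / (2 * d) * ((\<Sum>k<n. (path (Suc t) \<omega> k)\<^sup>2) / real n - 1))"
proof -
  obtain X s q where state: "csa_state (\<lambda>x. x 0) n lam c d X0 s0 (p0 \<omega>) (xi \<omega>) t = (X, s, q)"
    by (metis prod.exhaust)
  have "s > 0" using assms state by (simp add: step_size_def)
  then have "argmin_idx lam (\<lambda>i. X 0 + s * xi \<omega> t i 0) = selected t \<omega>"
    by (simp add: argmin_idx_affine selected_def)
  note sel = this
  show "path (Suc t) \<omega> = (\<lambda>k. decay * path t \<omega> k + gain * selected_step t k \<omega>)"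
    using state sel by (simp add: path_def selected_step_def Let_def decay_def gain_def)
  show "step_size (Suc t) \<omega> =
      step_size t \<omega> * exp (c / (2 * d) * ((\<Sum>k<n. (path (Suc t) \<omega> k)\<^sup>2) / real n - 1))"
    using state sel by (simp add: path_def step_size_def Let_def)
qed

lemma step_size_pos: "step_size t \<omega> > 0"
proof (induction t)
  case 0
  then show ?case using s0 by (simp add: step_size_def)
next
  case (Suc t)
  then show ?case using csa_state_Suc(2)[OF Suc] by simp
qed

lemma path_0: "path 0 \<omega> = p0 \<omega>"
  by (simp add: path_def)

lemma path_Suc: "path (Suc t) \<omega> k = decay * path t \<omega> k + gain * selected_step t k \<omega>"
  by (simp add: csa_state_Suc(1)[OF step_size_pos])

lemma ln_step_size_ratio:
  "ln (step_size (Suc t) \<omega> / step_size t \<omega>) =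
    c / (2 * d) * ((\<Sum>k<n. (path (Suc t) \<omega> k)\<^sup>2) / real n - 1)"
  using step_size_pos[of t \<omega>] by (simp add: csa_state_Suc(2)[OF step_size_pos])

lemma indep_noise: "indep_vars (\<lambda>_. borel) noise noise_index"
  using indep unfolding noise_def[abs_def] noise_index_def .

lemma noise_measurable: "j \<in> noise_index \<Longrightarrow> noise j \<in> borel_measurable M"
  using indep_noise unfolding indep_vars_def by blast

lemma past_block:
  "past t \<subseteq> noise_index" "block t \<subseteq> noise_index" "past t \<inter> block t = {}"
  "past t \<subseteq> past (Suc t)" "block t \<subseteq> past (Suc t)"
  unfolding past_def block_def noise_index_def by (blast, blast, blast, fastforce, fastforce)

lemma measurable_vars_sigma_M:
  "A \<subseteq> noise_index \<Longrightarrow> f \<in> borel_measurable (vars_sigma noise A) \<Longrightarrow> f \<in> borel_measurable M"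
  by (rule measurable_vars_sigma_subalgebra[where X=noise]) (auto intro: noise_measurable)

lemma noise_simps: "noise (Inl k) = (\<lambda>\<omega>. p0 \<omega> k)" "noise (Inr (t, i, k)) = (\<lambda>\<omega>. xi \<omega> t i k)"
  by (simp_all add: fun_eq_iff noise_def)

lemma xi_measurable_vars_sigma:
  "Inr (t, i, k) \<in> A \<Longrightarrow> (\<lambda>\<omega>. xi \<omega> t i k) \<in> borel_measurable (vars_sigma noise A)"
  using measurable_vars_sigma[of "Inr (t, i, k)" A noise] by (simp add: noise_simps)

lemma selected_measurable:
  assumes "\<And>i. i < lam \<Longrightarrow> Inr (t, i, 0) \<in> A"
  shows "selected t \<in> measurable (vars_sigma noise A) (count_space UNIV)"
  unfolding selected_def argmin_idx_def
proof (rule measurable_Least)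
  fix i
  show "Measurable.pred (vars_sigma noise A) (\<lambda>\<omega>. i < lam \<and> (\<forall>j<lam. xi \<omega> t i 0 \<le> xi \<omega> t j 0))"
  proof (cases "i < lam")
    case True
    have xi_i: "(\<lambda>\<omega>. xi \<omega> t i 0) \<in> borel_measurable (vars_sigma noise A)"
      using assms True by (intro xi_measurable_vars_sigma)
    have eq: "(\<lambda>\<omega>. i < lam \<and> (\<forall>j<lam. xi \<omega> t i 0 \<le> xi \<omega> t j 0)) =
        (\<lambda>\<omega>. \<forall>j\<in>{..<lam}. xi \<omega> t i 0 \<le> xi \<omega> t j 0)"
      using True by auto
    show ?thesis
      unfolding eq
    proof (rule pred_intros_finite(3))
      fix j assume "j \<in> {..<lam}"
      then have xi_j: "(\<lambda>\<omega>. xi \<omega> t j 0) \<in> borel_measurable (vars_sigma noise A)"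
        using assms by (intro xi_measurable_vars_sigma) auto
      show "Measurable.pred (vars_sigma noise A) (\<lambda>\<omega>. xi \<omega> t i 0 \<le> xi \<omega> t j 0)"
        unfolding pred_def using xi_i xi_j by (rule borel_measurable_le)
    qed simp
  qed simp
qed

lemma selected_less: "selected t \<omega> < lam"
  using argmin_idx_is_min[OF lam] by (simp add: selected_def)

lemma selected_step_eq_sum:
  "selected_step t k \<omega> ^ u = (\<Sum>i<lam. if i = selected t \<omega> then xi \<omega> t i k ^ u else 0)"
  using selected_less[of t \<omega>] by (simp add: selected_step_def)

lemma selected_step_measurable:
  assumes "\<And>i. i < lam \<Longrightarrow> Inr (t, i, 0) \<in> A" "\<And>i. i < lam \<Longrightarrow> Inr (t, i, k) \<in> A"
  shows "selected_step t k \<in> borel_measurable (vars_sigma noise A)"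
proof -
  have sel: "selected t \<in> measurable (vars_sigma noise A) (count_space UNIV)"
    using selected_measurable[OF assms(1)] .
  have "(\<lambda>\<omega>. if i = selected t \<omega> then xi \<omega> t i k else 0) \<in> borel_measurable (vars_sigma noise A)"
    if "i < lam" for i
  proof (rule measurable_If)
    show "(\<lambda>\<omega>. xi \<omega> t i k) \<in> borel_measurable (vars_sigma noise A)"
      using assms(2) that by (intro xi_measurable_vars_sigma)
    show "{\<omega> \<in> space (vars_sigma noise A). i = selected t \<omega>} \<in> sets (vars_sigma noise A)"
      using pred_eq_const2[OF sel, of i] by (simp add: pred_def)
  qed simp
  then have "(\<lambda>\<omega>. \<Sum>i<lam. if i = selected t \<omega> then xi \<omega> t i k else 0)
      \<in> borel_measurable (vars_sigma noise A)"
    by (intro borel_measurable_sum) simp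
  moreover have "selected_step t k = (\<lambda>\<omega>. \<Sum>i<lam. if i = selected t \<omega> then xi \<omega> t i k else 0)"
    using selected_step_eq_sum[where u=1] by (simp add: fun_eq_iff)
  ultimately show ?thesis
    by simp
qed

lemma selected_step_measurable_block:
  "k < n \<Longrightarrow> selected_step t k \<in> borel_measurable (vars_sigma noise (block t))"
  using n by (intro selected_step_measurable) (auto simp: block_def)

lemma path_measurable_past:
  "k < n \<Longrightarrow> (\<lambda>\<omega>. path t \<omega> k) \<in> borel_measurable (vars_sigma noise (past t))"
proof (induction t)
  case 0
  then show ?case
    using measurable_vars_sigma[of "Inl k" "past 0" noise] by (simp add: past_def noise_simps path_0)
next
  case (Suc t)
  have "(\<lambda>\<omega>. path t \<omega> k) \<in> borel_measurable (vars_sigma noise (past (Suc t)))"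
    using vars_sigma_mono[OF past_block(4) Suc.IH[OF Suc.prems]] .
  moreover have "selected_step t k \<in> borel_measurable (vars_sigma noise (past (Suc t)))"
    using vars_sigma_mono[OF past_block(5) selected_step_measurable_block[OF Suc.prems]] .
  ultimately show ?case
    unfolding path_Suc by (intro borel_measurable_add borel_measurable_times borel_measurable_const)
qed

lemma path_measurable: "k < n \<Longrightarrow> (\<lambda>\<omega>. path t \<omega> k) \<in> borel_measurable M"
  using measurable_vars_sigma_M[OF past_block(1) path_measurable_past] .

lemma selected_step_measurable_M: "k < n \<Longrightarrow> selected_step t k \<in> borel_measurable M"
  using measurable_vars_sigma_M[OF past_block(2) selected_step_measurable_block] .

lemma xi_power: "i < lam \<Longrightarrow> k < n \<Longrightarrow> integrable M (\<lambda>\<omega>. xi \<omega> t i k ^ u)"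
  "i < lam \<Longrightarrow> k < n \<Longrightarrow> (\<integral>\<omega>. xi \<omega> t i k ^ u \<partial>M) = std_normal_moment u"
  using std_normal_power[OF xi_normal] by auto

lemma p0_power: "k < n \<Longrightarrow> integrable M (\<lambda>\<omega>. p0 \<omega> k ^ u)"
  "k < n \<Longrightarrow> (\<integral>\<omega>. p0 \<omega> k ^ u \<partial>M) = std_normal_moment u"
  using std_normal_power[OF p0_normal] by auto

lemma selected_step_power_integrable:
  assumes "k < n"
  shows "integrable M (\<lambda>\<omega>. selected_step t k \<omega> ^ u)"
proof (rule Bochner_Integration.integrable_bound)
  show "integrable M (\<lambda>\<omega>. \<Sum>i<lam. \<bar>xi \<omega> t i k ^ u\<bar>)"
    using xi_power(1) assms by auto
  show "(\<lambda>\<omega>. selected_step t k \<omega> ^ u) \<in> borel_measurable M"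
    using selected_step_measurable_M[OF assms] by (rule borel_measurable_power)
  have "\<bar>selected_step t k \<omega> ^ u\<bar> \<le> (\<Sum>i<lam. \<bar>xi \<omega> t i k ^ u\<bar>)" for \<omega>
    unfolding selected_step_def using selected_less
    by (intro member_le_sum[where f="\<lambda>i. \<bar>xi \<omega> t i k ^ u\<bar>"]) auto
  then show "AE \<omega> in M. norm (selected_step t k \<omega> ^ u) \<le> norm (\<Sum>i<lam. \<bar>xi \<omega> t i k ^ u\<bar>)"
    by (intro AE_I2) simp
qed

lemma path_power4_integrable: "k < n \<Longrightarrow> integrable M (\<lambda>\<omega>. path t \<omega> k ^ 4)"
proof (induction t)
  case 0
  then show ?case using p0_power(1) by (simp add: path_0)
next
  case (Suc t)
  show ?case
  proof (rule Bochner_Integration.integrable_bound)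
    show "integrable M (\<lambda>\<omega>. 8 * (decay ^ 4 * path t \<omega> k ^ 4) + 8 * (gain ^ 4 * selected_step t k \<omega> ^ 4))"
      using Suc selected_step_power_integrable by auto
    show "(\<lambda>\<omega>. path (Suc t) \<omega> k ^ 4) \<in> borel_measurable M"
      using path_measurable[OF Suc.prems] by (rule borel_measurable_power)
    show "AE \<omega> in M. norm (path (Suc t) \<omega> k ^ 4)
        \<le> norm (8 * (decay ^ 4 * path t \<omega> k ^ 4) + 8 * (gain ^ 4 * selected_step t k \<omega> ^ 4))"
      using power4_add_le[of "decay * path t _ k" "gain * selected_step t k _"]
      by (intro AE_I2) (simp add: path_Suc power_mult_distrib zero_le_even_power)
  qed
qed

lemma path_power_integrable:
  "j < n \<Longrightarrow> k < n \<Longrightarrow> e1 + e2 \<le> 4 \<Longrightarrow> integrable M (\<lambda>\<omega>. path t \<omega> j ^ e1 * path t \<omega> k ^ e2)"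
  by (intro integrable_power_mult path_measurable path_power4_integrable)

text \<open>Whether child \<open>i\<close> is selected depends only on the first coordinates of the samples,
  so it is independent of the coordinates \<open>k \<noteq> 0\<close> of child \<open>i\<close>.\<close>
lemma selected_coordinate_factor:
  fixes t u :: nat
  assumes i: "i < lam" and jk: "j < n" "k < n" "k \<noteq> 0" "j \<noteq> k"
  defines "Y \<equiv> \<lambda>\<omega>. if i = selected t \<omega> then xi \<omega> t i j ^ u else 0"
  shows "integrable M Y" and "integrable M (\<lambda>\<omega>. Y \<omega> * xi \<omega> t i k ^ v)"
    and "(\<integral>\<omega>. Y \<omega> * xi \<omega> t i k ^ v \<partial>M) = (\<integral>\<omega>. Y \<omega> \<partial>M) * std_normal_moment v"
proof -
  define A :: "(nat + nat \<times> nat \<times> nat) set"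
    where "A = insert (Inr (t, i, j)) {Inr (t, i', 0) | i'. i' < lam}"
  have AB: "A \<subseteq> noise_index" "{Inr (t, i, k)} \<subseteq> noise_index" "A \<inter> {Inr (t, i, k)} = {}"
    using jk i n by (auto simp: A_def noise_index_def)
  have sel: "selected t \<in> measurable (vars_sigma noise A) (count_space UNIV)"
    by (rule selected_measurable) (auto simp: A_def)
  have xi_A: "(\<lambda>\<omega>. xi \<omega> t i j) \<in> borel_measurable (vars_sigma noise A)"
    by (rule xi_measurable_vars_sigma) (simp add: A_def)
  have Y: "Y \<in> borel_measurable (vars_sigma noise A)"
    unfolding Y_def
  proof (rule measurable_If)
    show "{\<omega> \<in> space (vars_sigma noise A). i = selected t \<omega>} \<in> sets (vars_sigma noise A)"
      using pred_eq_const2[OF sel, of i] by (simp add: pred_def)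
  qed (use xi_A in \<open>auto intro: borel_measurable_power\<close>)
  have Z: "(\<lambda>\<omega>. xi \<omega> t i k ^ v) \<in> borel_measurable (vars_sigma noise {Inr (t, i, k)})"
    by (intro borel_measurable_power xi_measurable_vars_sigma) simp
  show int_Y: "integrable M Y"
  proof (rule Bochner_Integration.integrable_bound)
    show "integrable M (\<lambda>\<omega>. xi \<omega> t i j ^ u)" using xi_power(1) i jk by auto
    show "Y \<in> borel_measurable M" using measurable_vars_sigma_M[OF AB(1) Y] .
  qed (auto simp: Y_def)
  show "integrable M (\<lambda>\<omega>. Y \<omega> * xi \<omega> t i k ^ v)"
    and "(\<integral>\<omega>. Y \<omega> * xi \<omega> t i k ^ v \<partial>M) = (\<integral>\<omega>. Y \<omega> \<partial>M) * std_normal_moment v"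
    using indep_vars_sigma_integral_mult[OF indep_noise AB Y Z int_Y] xi_power[OF i jk(2)] by auto
qed

lemma selected_step_moment_mixed:
  assumes jk: "j < n" "k < n" "k \<noteq> 0" "j \<noteq> k"
  shows "(\<integral>\<omega>. selected_step t j \<omega> ^ u * selected_step t k \<omega> ^ v \<partial>M) =
    (\<integral>\<omega>. selected_step t j \<omega> ^ u \<partial>M) * std_normal_moment v"
proof -
  let ?Y = "\<lambda>i \<omega>. if i = selected t \<omega> then xi \<omega> t i j ^ u else 0"
  note factor = selected_coordinate_factor[OF _ jk, where t=t and u=u]
  have "selected_step t j \<omega> ^ u * selected_step t k \<omega> ^ v = (\<Sum>i<lam. ?Y i \<omega> * xi \<omega> t i k ^ v)" for \<omega>
  proof -
    have "(\<Sum>i<lam. ?Y i \<omega> * xi \<omega> t i k ^ v) =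
        (\<Sum>i<lam. if i = selected t \<omega> then xi \<omega> t i j ^ u * xi \<omega> t i k ^ v else 0)"
      by (intro sum.cong) auto
    also have "\<dots> = selected_step t j \<omega> ^ u * selected_step t k \<omega> ^ v"
      using selected_less[of t \<omega>] by (subst sum.delta) (auto simp: selected_step_def)
    finally show ?thesis ..
  qed
  then have "(\<integral>\<omega>. selected_step t j \<omega> ^ u * selected_step t k \<omega> ^ v \<partial>M) =
      (\<Sum>i<lam. (\<integral>\<omega>. ?Y i \<omega> \<partial>M)) * std_normal_moment v"
    using factor(2,3) by (simp add: Bochner_Integration.integral_sum sum_distrib_right)
  also have "(\<Sum>i<lam. (\<integral>\<omega>. ?Y i \<omega> \<partial>M)) = (\<integral>\<omega>. (\<Sum>i<lam. ?Y i \<omega>) \<partial>M)"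
    using factor(1) by (intro Bochner_Integration.integral_sum[symmetric]) auto
  also have "\<dots> = (\<integral>\<omega>. selected_step t j \<omega> ^ u \<partial>M)"
    by (simp only: selected_step_eq_sum)
  finally show ?thesis .
qed

lemma selected_step_first_moment: "(\<integral>\<omega>. selected_step t 0 \<omega> ^ u \<partial>M) = Emin lam u"
proof -
  have "indep_vars (\<lambda>_. borel) (\<lambda>i. noise (Inr (t, i, 0))) {..<lam}"
  proof (rule indep_vars_reindex)
    show "inj_on (\<lambda>i. Inr (t, i, 0)) {..<lam}" by (auto simp: inj_on_def)
    show "indep_vars (\<lambda>_. borel) noise ((\<lambda>i. Inr (t, i, 0)) ` {..<lam})"
      using n by (intro indep_vars_subset[OF indep_noise]) (auto simp: noise_index_def)
  qed
  then have "(\<integral>\<omega>. Min ((\<lambda>i. xi \<omega> t i 0) ` {..<lam}) ^ u \<partial>M) = Emin lam u"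
    using n xi_normal by (intro integral_Min_std_normal lam) (auto simp: noise_simps)
  moreover have "selected_step t 0 \<omega> = Min ((\<lambda>i. xi \<omega> t i 0) ` {..<lam})" for \<omega>
    using argmin_idx_is_min[OF lam] by (simp add: selected_step_def selected_def)
  ultimately show ?thesis by simp
qed

lemma path_selected_step_factor:
  assumes jk: "j < n" "k < n" and deg: "u + v \<le> 4" "u' + v' \<le> 4"
  shows "(\<integral>\<omega>. (path t \<omega> j ^ u * path t \<omega> k ^ v) * (selected_step t j \<omega> ^ u' * selected_step t k \<omega> ^ v') \<partial>M) =
    (\<integral>\<omega>. path t \<omega> j ^ u * path t \<omega> k ^ v \<partial>M) *
    (\<integral>\<omega>. selected_step t j \<omega> ^ u' * selected_step t k \<omega> ^ v' \<partial>M)"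
proof (rule indep_vars_sigma_integral_mult(1)[OF indep_noise past_block(1-3)])
  show "(\<lambda>\<omega>. path t \<omega> j ^ u * path t \<omega> k ^ v) \<in> borel_measurable (vars_sigma noise (past t))"
    using jk by (intro borel_measurable_times borel_measurable_power path_measurable_past)
  show "(\<lambda>\<omega>. selected_step t j \<omega> ^ u' * selected_step t k \<omega> ^ v') \<in> borel_measurable (vars_sigma noise (block t))"
    using jk by (intro borel_measurable_times borel_measurable_power selected_step_measurable_block)
  show "integrable M (\<lambda>\<omega>. path t \<omega> j ^ u * path t \<omega> k ^ v)"
    using jk deg(1) by (rule path_power_integrable)
  show "integrable M (\<lambda>\<omega>. selected_step t j \<omega> ^ u' * selected_step t k \<omega> ^ v')"
    using jk deg
    by (intro integrable_power_mult selected_step_measurable_M selected_step_power_integrable)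
qed

lemma path_moment_Suc:
  assumes jk: "j < n" "k < n" and deg: "\<alpha> + \<beta> \<le> 4"
  shows "(\<integral>\<omega>. path (Suc t) \<omega> j ^ \<alpha> * path (Suc t) \<omega> k ^ \<beta> \<partial>M) =
    (\<Sum>u\<le>\<alpha>. \<Sum>v\<le>\<beta>. of_nat (\<alpha> choose u) * of_nat (\<beta> choose v) * decay ^ (u + v) * gain ^ (\<alpha> + \<beta> - u - v)
      * (\<integral>\<omega>. path t \<omega> j ^ u * path t \<omega> k ^ v \<partial>M)
      * (\<integral>\<omega>. selected_step t j \<omega> ^ (\<alpha> - u) * selected_step t k \<omega> ^ (\<beta> - v) \<partial>M))"
  unfolding path_Suc
  using jk deg
  by (intro integral_binomial_expansion path_measurable path_power4_integrable
      selected_step_measurable_M selected_step_power_integrable path_selected_step_factor) auto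

lemma path_moment_mixed:
  assumes "j < n" "k < n" "k \<noteq> 0" "j \<noteq> k" "u + v \<le> 4"
  shows "(\<integral>\<omega>. path t \<omega> j ^ u * path t \<omega> k ^ v \<partial>M) = (\<integral>\<omega>. path t \<omega> j ^ u \<partial>M) * std_normal_moment v"
  using assms
proof (induction t arbitrary: u v)
  case 0
  have AB: "{Inl j} \<subseteq> noise_index" "{Inl k} \<subseteq> noise_index" "{Inl j} \<inter> {Inl k} = {}"
    using 0 by (auto simp: noise_index_def)
  have meas: "(\<lambda>\<omega>. p0 \<omega> i ^ w) \<in> borel_measurable (vars_sigma noise {Inl i})" for i w
    using measurable_vars_sigma[of "Inl i" "{Inl i}" noise]
    by (intro borel_measurable_power) (simp add: noise_simps)
  have "(\<integral>\<omega>. p0 \<omega> j ^ u * p0 \<omega> k ^ v \<partial>M) = (\<integral>\<omega>. p0 \<omega> j ^ u \<partial>M) * (\<integral>\<omega>. p0 \<omega> k ^ v \<partial>M)"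
    using 0 by (intro indep_vars_sigma_integral_mult(1)[OF indep_noise AB meas meas] p0_power) auto
  then show ?case
    using p0_power(2)[OF \<open>k < n\<close>] by (simp add: path_0)
next
  case (Suc t)
  define A where "A u1 = of_nat (u choose u1) * decay ^ u1 * gain ^ (u - u1)
    * (\<integral>\<omega>. path t \<omega> j ^ u1 \<partial>M) * (\<integral>\<omega>. selected_step t j \<omega> ^ (u - u1) \<partial>M)" for u1
  define B where "B v1 = of_nat (v choose v1) * decay ^ v1 * gain ^ (v - v1)
    * std_normal_moment v1 * std_normal_moment (v - v1)" for v1
  have "(\<integral>\<omega>. path (Suc t) \<omega> j ^ u * path (Suc t) \<omega> k ^ v \<partial>M) = (\<Sum>u1\<le>u. \<Sum>v1\<le>v. A u1 * B v1)"
    unfolding path_moment_Suc[OF Suc.prems(1,2,5)]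
  proof (intro sum.cong refl)
    fix u1 v1 assume "u1 \<in> {..u}" "v1 \<in> {..v}"
    moreover from this have "decay ^ (u1 + v1) * gain ^ (u + v - u1 - v1) =
        (decay ^ u1 * gain ^ (u - u1)) * (decay ^ v1 * gain ^ (v - v1))"
      by (simp add: power_add[symmetric] mult_ac)
    ultimately show "of_nat (u choose u1) * of_nat (v choose v1) * decay ^ (u1 + v1) * gain ^ (u + v - u1 - v1)
        * (\<integral>\<omega>. path t \<omega> j ^ u1 * path t \<omega> k ^ v1 \<partial>M)
        * (\<integral>\<omega>. selected_step t j \<omega> ^ (u - u1) * selected_step t k \<omega> ^ (v - v1) \<partial>M) = A u1 * B v1"
      using Suc.IH[of u1 v1] selected_step_moment_mixed[OF Suc.prems(1-4)] Suc.prems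
      by (simp add: A_def B_def mult_ac)
  qed
  also have "\<dots> = (\<Sum>u1\<le>u. A u1) * (\<Sum>v1\<le>v. B v1)"
    by (simp add: sum_product)
  also have "(\<Sum>v1\<le>v. B v1) = std_normal_moment v"
    unfolding B_def using decay_gain(3) Suc.prems(5) by (intro std_normal_moment_rotation) auto
  also have "(\<Sum>u1\<le>u. A u1) = (\<integral>\<omega>. path (Suc t) \<omega> j ^ u \<partial>M)"
    using path_moment_Suc[OF Suc.prems(1) Suc.prems(1), of u 0 t] Suc.prems(5)
    by (simp add: A_def)
  finally show ?case .
qed

definition path_moment :: "nat \<Rightarrow> nat \<Rightarrow> real" where
  "path_moment \<alpha> t = (\<integral>\<omega>. path t \<omega> 0 ^ \<alpha> \<partial>M)"

lemma path_moment_recurrence: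
  "\<alpha> \<le> 4 \<Longrightarrow> path_moment \<alpha> (Suc t) =
    (\<Sum>u\<le>\<alpha>. of_nat (\<alpha> choose u) * decay ^ u * gain ^ (\<alpha> - u) * path_moment u t * Emin lam (\<alpha> - u))"
  using path_moment_Suc[of 0 0 \<alpha> 0 t] n
  by (simp add: path_moment_def selected_step_first_moment mult_ac)

lemma path_moment_0: "path_moment 0 t = 1"
  by (simp add: path_moment_def prob_space)

lemma Emin_0: "Emin lam 0 = 1"
  using selected_step_first_moment[of _ 0] by (simp add: prob_space)

lemmas path_moment_limits =
  moment_recurrence_limits[where e=path_moment and m="Emin lam",
    OF decay_gain path_moment_0 Emin_0 path_moment_recurrence]

definition path_sqnorm :: "nat \<Rightarrow> 'a \<Rightarrow> real" where
  "path_sqnorm t \<omega> = (\<Sum>k<n. (path t \<omega> k)\<^sup>2)"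

lemma sum_lessThan_split_0: "(\<Sum>k<n. f k) = f 0 + (\<Sum>k\<in>{1..<n}. f k)"
proof -
  have "{..<n} = insert 0 {1..<n}" using n by auto
  then show ?thesis by simp
qed

lemma path_square_moments:
  assumes k: "k \<in> {1..<n}"
  shows "(\<integral>\<omega>. path t \<omega> k ^ 2 \<partial>M) = 1"
    and "(\<integral>\<omega>. path t \<omega> 0 ^ 2 * path t \<omega> k ^ 2 \<partial>M) = path_moment 2 t"
    and "(\<integral>\<omega>. path t \<omega> k ^ 2 * path t \<omega> 0 ^ 2 \<partial>M) = path_moment 2 t"
    and "(\<integral>\<omega>. path t \<omega> k ^ 4 \<partial>M) = 3"
    and "j \<in> {1..<n} \<Longrightarrow> j \<noteq> k \<Longrightarrow> (\<integral>\<omega>. path t \<omega> j ^ 2 * path t \<omega> k ^ 2 \<partial>M) = 1"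
proof -
  have n0: "0 < n" using n by simp
  show sq: "(\<integral>\<omega>. path t \<omega> k ^ 2 \<partial>M) = 1"
    using path_moment_mixed[OF n0, of k 0 2 t] k by (simp add: prob_space std_normal_moment_values)
  show "(\<integral>\<omega>. path t \<omega> 0 ^ 2 * path t \<omega> k ^ 2 \<partial>M) = path_moment 2 t"
    and "(\<integral>\<omega>. path t \<omega> k ^ 2 * path t \<omega> 0 ^ 2 \<partial>M) = path_moment 2 t"
    using path_moment_mixed[OF n0, of k 2 2 t] k
    by (simp_all add: path_moment_def std_normal_moment_values mult.commute)
  show "(\<integral>\<omega>. path t \<omega> k ^ 4 \<partial>M) = 3"
    using path_moment_mixed[OF n0, of k 0 4 t] k by (simp add: prob_space std_normal_moment_values)
  show "(\<integral>\<omega>. path t \<omega> j ^ 2 * path t \<omega> k ^ 2 \<partial>M) = 1" if "j \<in> {1..<n}" "j \<noteq> k"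
    using path_moment_mixed[of j k 2 2 t] path_moment_mixed[OF n0, of j 0 2 t] k that
    by (simp add: prob_space std_normal_moment_values)
qed

lemma path_sqnorm_integrable:
  "integrable M (path_sqnorm t)" "integrable M (\<lambda>\<omega>. (path_sqnorm t \<omega>)\<^sup>2)"
  "(\<lambda>\<omega>. (path_sqnorm t \<omega>)\<^sup>2) = (\<lambda>\<omega>. \<Sum>j<n. \<Sum>k<n. path t \<omega> j ^ 2 * path t \<omega> k ^ 2)"
proof -
  show sq: "(\<lambda>\<omega>. (path_sqnorm t \<omega>)\<^sup>2) = (\<lambda>\<omega>. \<Sum>j<n. \<Sum>k<n. path t \<omega> j ^ 2 * path t \<omega> k ^ 2)"
    unfolding path_sqnorm_def power2_eq_square[of "sum _ _"] sum_product by simp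
  show "integrable M (path_sqnorm t)"
    unfolding path_sqnorm_def[abs_def] using path_power_integrable[of _ _ 2 0] by auto
  show "integrable M (\<lambda>\<omega>. (path_sqnorm t \<omega>)\<^sup>2)"
    unfolding sq using path_power_integrable[of _ _ 2 2]
    by (auto intro!: Bochner_Integration.integrable_sum)
qed

lemma integral_path_sqnorm: "(\<integral>\<omega>. path_sqnorm t \<omega> \<partial>M) = path_moment 2 t + (real n - 1)"
proof -
  have "(\<integral>\<omega>. path_sqnorm t \<omega> \<partial>M) = (\<Sum>k<n. (\<integral>\<omega>. path t \<omega> k ^ 2 \<partial>M))"
    unfolding path_sqnorm_def using path_power_integrable[of _ _ 2 0]
    by (intro Bochner_Integration.integral_sum) auto
  also have "\<dots> = path_moment 2 t + (real n - 1)"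
    unfolding sum_lessThan_split_0 using n by (simp add: path_moment_def path_square_moments of_nat_diff)
  finally show ?thesis .
qed

lemma integral_path_sqnorm_sq:
  "(\<integral>\<omega>. (path_sqnorm t \<omega>)\<^sup>2 \<partial>M) =
    path_moment 4 t + (real n - 1) * path_moment 2 t + (real n - 1) * (path_moment 2 t + 1 + real n)"
proof -
  define Q where "Q j k = (\<integral>\<omega>. path t \<omega> j ^ 2 * path t \<omega> k ^ 2 \<partial>M)" for j k
  have row_0: "(\<Sum>k<n. Q 0 k) = path_moment 4 t + (real n - 1) * path_moment 2 t"
  proof -
    have "Q 0 0 = path_moment 4 t"
      by (simp add: Q_def path_moment_def power2_eq_square power4_eq_xxxx mult_ac)
    then show ?thesis
      unfolding sum_lessThan_split_0 using n by (simp add: Q_def path_square_moments(2) of_nat_diff)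
  qed
  have row: "(\<Sum>k<n. Q j k) = path_moment 2 t + 3 + (real n - 2)" if j: "j \<in> {1..<n}" for j
  proof -
    have "(\<Sum>k<n. Q j k) = path_moment 2 t + Q j j + (\<Sum>k\<in>{1..<n} - {j}. Q j k)"
      unfolding sum_lessThan_split_0 using j by (simp add: Q_def path_square_moments(3) sum.remove)
    also have "(\<Sum>k\<in>{1..<n} - {j}. Q j k) = real n - 2"
      using j by (simp add: Q_def path_square_moments(5) of_nat_diff)
    finally show ?thesis using j by (simp add: Q_def path_square_moments(4))
  qed
  have int: "integrable M (\<lambda>\<omega>. path t \<omega> j ^ 2 * path t \<omega> k ^ 2)" if "j < n" "k < n" for j k
    using that by (intro path_power_integrable) auto
  have "(\<integral>\<omega>. (path_sqnorm t \<omega>)\<^sup>2 \<partial>M) =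
      (\<Sum>j<n. (\<integral>\<omega>. (\<Sum>k<n. path t \<omega> j ^ 2 * path t \<omega> k ^ 2) \<partial>M))"
    unfolding path_sqnorm_integrable(3)
    by (rule Bochner_Integration.integral_sum) (auto intro!: Bochner_Integration.integrable_sum int)
  also have "\<dots> = (\<Sum>j<n. \<Sum>k<n. Q j k)"
    unfolding Q_def by (intro sum.cong refl Bochner_Integration.integral_sum int) auto
  also have "\<dots> = (\<Sum>k<n. Q 0 k) + (\<Sum>j\<in>{1..<n}. path_moment 2 t + 3 + (real n - 2))"
    by (subst sum_lessThan_split_0) (simp add: row)
  finally show ?thesis
    using n by (simp add: row_0 of_nat_diff algebra_simps)
qed

lemma variance_ln_step_size_ratio:
  "(let L = (\<lambda>\<omega>. ln (step_size (Suc t) \<omega> / step_size t \<omega>)) in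
      (\<integral>\<omega>. (L \<omega> - (\<integral>\<omega>'. L \<omega>' \<partial>M))\<^sup>2 \<partial>M)) =
    c\<^sup>2 / (4 * d\<^sup>2 * (real n)\<^sup>2) *
      (path_moment 4 (Suc t) - (path_moment 2 (Suc t))\<^sup>2 + 2 * (real n - 1))"
proof -
  define A where "A = c / (2 * d) / real n"
  have L: "(\<lambda>\<omega>. ln (step_size (Suc t) \<omega> / step_size t \<omega>)) =
      (\<lambda>\<omega>. A * path_sqnorm (Suc t) \<omega> + - (c / (2 * d)))"
    unfolding ln_step_size_ratio path_sqnorm_def A_def by (simp add: algebra_simps)
  have "(let L = (\<lambda>\<omega>. ln (step_size (Suc t) \<omega> / step_size t \<omega>)) in
      (\<integral>\<omega>. (L \<omega> - (\<integral>\<omega>'. L \<omega>' \<partial>M))\<^sup>2 \<partial>M)) =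
    A\<^sup>2 * ((\<integral>\<omega>. (path_sqnorm (Suc t) \<omega>)\<^sup>2 \<partial>M) - (\<integral>\<omega>. path_sqnorm (Suc t) \<omega> \<partial>M)\<^sup>2)"
    unfolding L Let_def by (intro variance_affine path_sqnorm_integrable)
  also have "\<dots> = c\<^sup>2 / (4 * d\<^sup>2 * (real n)\<^sup>2) *
      (path_moment 4 (Suc t) - (path_moment 2 (Suc t))\<^sup>2 + 2 * (real n - 1))"
    unfolding integral_path_sqnorm integral_path_sqnorm_sq A_def
    by (simp add: power_divide power_mult_distrib power2_eq_square algebra_simps)
  finally show ?thesis .
qed

end

theorem theorem4:
  fixes M :: "'a measure" and n lam :: nat and c d s0 :: real
    and X0 :: "nat \<Rightarrow> real" and p0 :: "'a \<Rightarrow> nat \<Rightarrow> real"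
    and xi :: "'a \<Rightarrow> nat \<Rightarrow> nat \<Rightarrow> nat \<Rightarrow> real"
  assumes "prob_space M"
    and "n \<ge> 1" and "lam \<ge> 1" and "0 < c" and "c \<le> 1" and "d > 0" and "s0 > 0"
    and indep: "prob_space.indep_vars M (\<lambda>_. borel)
        (\<lambda>j \<omega>. case j of Inl k \<Rightarrow> p0 \<omega> k | Inr (t, i, k) \<Rightarrow> xi \<omega> t i k)
        ({Inl k | k. k < n} \<union> {Inr (t, i, k) | t i k. i < lam \<and> k < n})"
    and p0_normal: "\<And>k. k < n \<Longrightarrow> distributed M lborel (\<lambda>\<omega>. p0 \<omega> k) std_normal_density"
    and xi_normal: "\<And>t i k. i < lam \<Longrightarrow> k < n \<Longrightarrow>
                      distributed M lborel (\<lambda>\<omega>. xi \<omega> t i k) std_normal_density"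
  defines "sig \<equiv> \<lambda>t \<omega>. fst (snd (csa_state (\<lambda>x. x 0) n lam c d X0 s0 (p0 \<omega>) (xi \<omega>) t))"
    and "p \<equiv> \<lambda>t \<omega>. snd (snd (csa_state (\<lambda>x. x 0) n lam c d X0 s0 (p0 \<omega>) (xi \<omega>) t))"
    and "a \<equiv> 1 - c"
  shows
    "(\<forall>t. (let L = (\<lambda>\<omega>. ln (sig (Suc t) \<omega> / sig t \<omega>)) in
             (LINT \<omega>|M. (L \<omega> - (LINT \<omega>'|M. L \<omega>'))\<^sup>2))
          = c\<^sup>2 / (4 * d\<^sup>2 * (real n)\<^sup>2) *
            ((LINT \<omega>|M. (p (Suc t) \<omega> 0) ^ 4) - (LINT \<omega>|M. (p (Suc t) \<omega> 0) ^ 2)\<^sup>2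
             + 2 * (real n - 1)))
     \<and> ((\<lambda>t. LINT \<omega>|M. (p (Suc t) \<omega> 0) ^ 2)
          \<longlonglongrightarrow> Emin lam 2 + (2 - 2 * c) / c * (Emin lam 1)\<^sup>2)
     \<and> ((\<lambda>t. LINT \<omega>|M. (p t \<omega> 0) ^ 4)
          \<longlonglongrightarrow> (1 - a\<^sup>2)\<^sup>2 / (1 - a ^ 4) *
              (Emin lam 4
               + 4 * (a * (1 + a + 2 * a\<^sup>2) / (1 - a ^ 3)) * Emin lam 3 * Emin lam 1
               + 6 * (a\<^sup>2 / (1 - a\<^sup>2)) * (Emin lam 2)\<^sup>2
               + 12 * (a ^ 3 * (1 + 2 * a + 3 * a\<^sup>2) / ((1 - a\<^sup>2) * (1 - a ^ 3)))
                    * Emin lam 2 * (Emin lam 1)\<^sup>2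
               + 24 * (a ^ 6 / ((1 - a) * (1 - a\<^sup>2) * (1 - a ^ 3))) * (Emin lam 1) ^ 4))"
proof -
  interpret csa_first_coordinate M n lam c d s0 X0 p0 xi
    by (intro csa_first_coordinate.intro csa_first_coordinate_axioms.intro) (use assms in auto)
  have sig_p: "sig = step_size" "p = path"
    by (simp_all add: fun_eq_iff sig_def p_def step_size_def path_def)
  have "2 * decay / (1 - decay) = (2 - 2 * c) / c"
    by (simp add: decay_def algebra_simps)
  then have "(\<lambda>t. path_moment 2 (Suc t)) \<longlonglongrightarrow> Emin lam 2 + (2 - 2 * c) / c * (Emin lam 1)\<^sup>2"
    using LIMSEQ_Suc[OF path_moment_limits(1)] by simp
  moreover note variance_ln_step_size_ratio path_moment_limits(2)
  ultimately show ?thesis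
    unfolding sig_p a_def decay_def[symmetric] path_moment_def[symmetric] stationary_fourth_moment_def
    by (intro conjI allI)
qed

end
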